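(* Assume the standing setup with $\lambda_1(\boldsymbol\Omega_K)>1$, and set $\mathbf v_1^{(r)}=\mathbf D_{\boldsymbol\rho^{\odot1/2}}(\mathbf 1_K-\mathbf g(1))$ and $\mathbf v_1^{(l)}=\boldsymbol\Omega_K\mathbf v_1^{(r)}$. Then $\mathbf v_1^{(r)}\succ\mathbf 0_K$, $(\mathbf D_{\mathbf g(1)}\boldsymbol\Omega_K)\mathbf v_1^{(r)}=\mathbf v_1^{(r)}$ and $(\mathbf D_{\mathbf g(1)}\boldsymbol\Omega_K)^\top\mathbf v_1^{(l)}=\mathbf v_1^{(l)}$.
   Context: Standing setup: $K\ge1$, $\boldsymbol\rho=(\rho_k)$ with $\rho_k\in(0,1)$, $\sum\rho_k=1$; $\mathbf S_K=(s_{kl})$ symmetric with $s_{kl}>0$; $\mathbf D_{\mathbf v}$ diagonal with diagonal $\mathbf v$; $\boldsymbol\Omega_K=\mathbf D_{\boldsymbol\rho^{\odot1/2}}\mathbf S_K\mathbf D_{\boldsymbol\rho^{\odot1/2}}$, $\boldsymbol\Gamma_K=\mathbf S_K\mathbf D_{\boldsymbol\rho}$; $\lambda_1$ = largest eigenvalue. For each $N$, $[N]$ is split into consecutive blocks $B_k$ with $|B_k|/N\to\rho_k$; $\Sigma_{ij}=s_{kl}$ for $i\in B_k,j\in B_l$; $\mathbf H$ symmetric with independent standard Gaussian entries on/above the diagonal; $\mathbf X=\mathbf H\odot\boldsymbol\Sigma^{\odot1/2}-N^{-1/2}\mathrm{Diag}(\boldsymbol\Sigma\mathbf 1)$; $\mu_X$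 the a.s. limiting spectral distribution of $\mathbf X/\sqrt N$. QVE: for $z\in\mathbb H_-=\{\Im z<0\}$, $\mathbf g(z)$ is the unique solution in $(\mathbb H_+)^K$ of $\mathbf 1_K=z\mathbf g-\mathbf g\odot\boldsymbol\Gamma_K(\mathbf g-\mathbf 1_K)$, $\sum_k\rho_kg_k$ being the Stieltjes transform of $\mu_X$; $\mathbf g(1)$ is the value at $1$ of its continuous extension to $\mathbb H_-\cup\mathbb R$. $\succ$ is entrywise strict inequality. *)

theory Defs
  imports "HOL-Analysis.Analysis"
begin

text \<open>Index set [K] is rendered as a finite type 'k (so K = CARD('k) \<ge> 1).\<close>

definition diagm :: "'a::zero ^ 'k \<Rightarrow> 'a ^ 'k ^ 'k" where
  "diagm v = (\<chi> i j. if i = j then v $ i else 0)"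

definition cmat :: "real ^ 'k ^ 'k \<Rightarrow> complex ^ 'k ^ 'k" where
  "cmat A = (\<chi> i j. complex_of_real (A $ i $ j))"

definition largest_eigenvalue :: "real ^ 'k ^ 'k \<Rightarrow> real" where
  "largest_eigenvalue A = Max {l. \<exists>v. v \<noteq> 0 \<and> A *v v = l *\<^sub>R v}"

definition Omega_K :: "real ^ 'k \<Rightarrow> real ^ 'k ^ 'k \<Rightarrow> real ^ 'k ^ 'k" where
  "Omega_K rho S = diagm (\<chi> i. sqrt (rho $ i)) ** S ** diagm (\<chi> i. sqrt (rho $ i))"

definition Gamma_K :: "real ^ 'k \<Rightarrow> real ^ 'k ^ 'k \<Rightarrow> real ^ 'k ^ 'k" where
  "Gamma_K rho S = S ** diagm rho"

definition solves_QVE :: "real ^ 'k \<Rightarrow> real ^ 'k ^ 'k \<Rightarrow> complex \<Rightarrow> complex ^ 'k \<Rightarrow> bool" where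
  "solves_QVE rho S z g \<longleftrightarrow>
     (\<forall>k. 1 = z * g $ k - g $ k * ((cmat (Gamma_K rho S) *v (g - 1)) $ k))"

text \<open>For Im z < 0: the unique solution in (H_+)^K.\<close>
definition QVE_g :: "real ^ 'k \<Rightarrow> real ^ 'k ^ 'k \<Rightarrow> complex \<Rightarrow> complex ^ 'k" where
  "QVE_g rho S z = (THE g. (\<forall>k. Im (g $ k) > 0) \<and> solves_QVE rho S z g)"

text \<open>g(1): value at 1 of the continuous extension of g from H_- to H_- \<union> R,
  i.e. the limit of g(z) as z \<rightarrow> 1 within H_-.\<close>
definition QVE_g1 :: "real ^ 'k \<Rightarrow> real ^ 'k ^ 'k \<Rightarrow> complex ^ 'k" where
  "QVE_g1 rho S = Lim (at 1 within {z. Im z < 0}) (QVE_g rho S)"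

end

theory Submission
  imports Defs
begin

text \<open>Let \<open>u = 1 - g(1)\<close>. Since \<open>\<lambda>\<^sub>1(\<Omega>\<^sub>K) > 1\<close>, Brouwer's theorem applied to
  \<open>w \<mapsto> \<Gamma>\<^sub>K w / (1 + \<Gamma>\<^sub>K w)\<close> above a small multiple of a Perron vector yields a real solution
  \<open>0 < u < 1\<close> of \<open>u = (1 - u) \<odot> \<Gamma>\<^sub>K u\<close>, i.e. \<open>1 - u\<close> solves the QVE at \<open>z = 1\<close>. For \<open>z\<close> in the lower
  half-plane near \<open>1\<close>, Brouwer's theorem on a small polydisc yields a solution near \<open>1 - u\<close>, whose
  imaginary parts are positive by a minimum principle; solutions with positive imaginary parts are
  unique by a maximum principle, so this solution is \<open>g(z)\<close> and hence \<open>g(1) = 1 - u\<close>. The right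
  eigenvector identity is the equation for \<open>u\<close> rewritten in terms of \<open>\<Omega>\<^sub>K\<close>, and the left one
  follows from the symmetry of \<open>\<Omega>\<^sub>K\<close>.\<close>

definition solves_qve :: "('k \<Rightarrow> 'k \<Rightarrow> real) \<Rightarrow> complex \<Rightarrow> complex ^ 'k \<Rightarrow> bool" where
  "solves_qve M z g \<longleftrightarrow>
     (\<forall>k. 1 = z * g $ k - g $ k * (\<Sum>l\<in>UNIV. complex_of_real (M k l) * (g $ l - 1)))"

lemma mult_diagm_nth: "(A ** diagm v) $ i $ j = A $ i $ j * v $ j"
  by (simp add: diagm_def matrix_matrix_mult_def if_distrib[where f="\<lambda>x. _ * x"] cong: if_cong)

lemma diagm_mult_nth: "(diagm v ** A) $ i $ j = v $ i * A $ i $ j"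
  by (simp add: diagm_def matrix_matrix_mult_def if_distrib[where f="\<lambda>x. x * _"] cong: if_cong)

lemma diagm_mult_vector: "(diagm d ** A) *v v = (\<chi> k. d $ k * (A *v v) $ k)"
  by (simp add: vec_eq_iff matrix_vector_mult_def diagm_mult_nth sum_distrib_left mult.assoc)

lemma cmat_diagm_mult_vector: "cmat (diagm w) *v x = (\<chi> k. complex_of_real (w $ k) * x $ k)"
  by (simp add: vec_eq_iff matrix_vector_mult_def cmat_def diagm_def if_distrib[where f=complex_of_real]
      if_distrib[where f="\<lambda>a. a * _"] cong: if_cong)

lemma cmat_mult_of_real: "cmat A *v (\<chi> k. complex_of_real (v $ k)) = (\<chi> k. complex_of_real ((A *v v) $ k))"
  by (simp add: vec_eq_iff matrix_vector_mult_def cmat_def)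

lemma transpose_cmat: "transpose (cmat A) = cmat (transpose A)"
  by (simp add: vec_eq_iff transpose_def cmat_def)

lemma transpose_diagm: "transpose (diagm d) = diagm d"
  by (simp add: vec_eq_iff transpose_def diagm_def)

lemma Omega_K_nth: "Omega_K rho S $ i $ j = sqrt (rho $ i) * S $ i $ j * sqrt (rho $ j)"
  by (simp add: Omega_K_def diagm_mult_nth mult_diagm_nth)

lemma transpose_Omega_K: "transpose S = S \<Longrightarrow> transpose (Omega_K rho S) = Omega_K rho S"
  unfolding Omega_K_def by (simp add: matrix_transpose_mul transpose_diagm matrix_mul_assoc)

lemma Omega_K_mult_vector:
  assumes "\<And>k. 0 < rho $ k"
  shows "(Omega_K rho S *v v) $ k
    = sqrt (rho $ k) * (\<Sum>j\<in>UNIV. S $ k $ j * rho $ j * (v $ j / sqrt (rho $ j)))"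
proof -
  have "S $ k $ j * rho $ j * (v $ j / sqrt (rho $ j)) = S $ k $ j * sqrt (rho $ j) * v $ j" for j
  proof -
    have "S $ k $ j * rho $ j * (v $ j / sqrt (rho $ j)) = S $ k $ j * (rho $ j / sqrt (rho $ j)) * v $ j"
      by simp
    then show ?thesis using assms[of j] by (simp add: real_div_sqrt)
  qed
  then show ?thesis
    by (simp add: matrix_vector_mult_def Omega_K_nth sum_distrib_left mult_ac)
qed

lemma solves_QVE_iff_solves_qve: "solves_QVE rho S z g \<longleftrightarrow> solves_qve (\<lambda>k l. S $ k $ l * rho $ l) z g"
proof -
  have "(cmat (Gamma_K rho S) *v (g - 1)) $ k
      = (\<Sum>l\<in>UNIV. complex_of_real (S $ k $ l * rho $ l) * (g $ l - 1))" for k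
    by (simp add: matrix_vector_mult_def cmat_def Gamma_K_def mult_diagm_nth)
  then show ?thesis by (simp add: solves_QVE_def solves_qve_def)
qed

section \<open>Maximum and minimum principles\<close>

lemma finite_UNIV_argmax:
  fixes r :: "'k::finite \<Rightarrow> 'a::linorder"
  obtains k0 where "\<And>k. r k \<le> r k0"
proof -
  have "Max (range r) \<in> range r" by (rule Max_in) auto
  then obtain k0 where "Max (range r) = r k0" by blast
  then have "r k \<le> r k0" for k using Max_ge[of "range r" "r k"] by simp
  then show ?thesis by (rule that)
qed

lemma finite_UNIV_argmin:
  fixes r :: "'k::finite \<Rightarrow> 'a::linorder"
  obtains k0 where "\<And>k. r k0 \<le> r k"
proof -
  have "Min (range r) \<in> range r" by (rule Min_in) auto
  then obtain k0 where "Min (range r) = r k0" by blast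
  then have "r k0 \<le> r k" for k using Min_le[of "range r" "r k"] by simp
  then show ?thesis by (rule that)
qed

text \<open>Compare the ratios \<open>x k / w k\<close> at a maximising index.\<close>
lemma subsolution_eq_zero:
  fixes M :: "'k::finite \<Rightarrow> 'k \<Rightarrow> real"
  assumes M: "\<And>k l. 0 \<le> M k l" and c: "\<And>k. 0 \<le> c k" and w: "\<And>k. 0 < w k"
    and strict: "\<And>k. c k * (\<Sum>l\<in>UNIV. M k l * w l) < w k"
    and x: "\<And>k. 0 \<le> x k" and sub: "\<And>k. x k \<le> c k * (\<Sum>l\<in>UNIV. M k l * x l)"
  shows "x k = 0"
proof -
  obtain k0 where k0: "\<And>k. x k / w k \<le> x k0 / w k0"
    using finite_UNIV_argmax[of "\<lambda>k. x k / w k"] by blast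
  define r where "r = x k0 / w k0"
  have xr: "x l \<le> r * w l" for l
    using k0[of l] w[of l] by (simp add: r_def divide_le_eq)
  have "\<not> 0 < r"
  proof
    assume r: "0 < r"
    have "x k0 \<le> c k0 * (\<Sum>l\<in>UNIV. M k0 l * (r * w l))"
      using sub[of k0] M c xr by (meson order_trans mult_left_mono sum_mono)
    also have "\<dots> = r * (c k0 * (\<Sum>l\<in>UNIV. M k0 l * w l))"
      by (simp add: sum_distrib_left algebra_simps)
    also have "\<dots> < r * w k0" using strict[of k0] r by simp
    finally show False using w[of k0] by (simp add: r_def)
  qed
  then have "r * w k \<le> 0" using w[of k] by (simp add: mult_nonpos_nonneg)
  then show ?thesis using xr[of k] x[of k] by linarith
qed

text \<open>Compare the ratios \<open>y k / u k\<close> at a minimising index.\<close>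
lemma strict_supersolution_pos:
  fixes M :: "'k::finite \<Rightarrow> 'k \<Rightarrow> real"
  assumes M: "\<And>k l. 0 \<le> M k l" and c: "\<And>k. 0 \<le> c k" and u: "\<And>k. 0 < u k"
    and sub: "\<And>k. c k * (\<Sum>l\<in>UNIV. M k l * u l) \<le> u k"
    and super: "\<And>k. c k * (\<Sum>l\<in>UNIV. M k l * y l) < y k"
  shows "0 < y k"
proof -
  obtain k0 where k0: "\<And>k. y k0 / u k0 \<le> y k / u k"
    using finite_UNIV_argmin[of "\<lambda>k. y k / u k"] by blast
  define r where "r = y k0 / u k0"
  have ry: "r * u l \<le> y l" for l
    using k0[of l] u[of l] by (simp add: r_def le_divide_eq)
  have "0 < r"
  proof (rule ccontr)
    assume "\<not> 0 < r"
    then have "r * u k0 \<le> r * (c k0 * (\<Sum>l\<in>UNIV. M k0 l * u l))"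
      using sub[of k0] by (simp add: mult_left_mono_neg)
    also have "\<dots> = c k0 * (\<Sum>l\<in>UNIV. M k0 l * (r * u l))"
      by (simp add: sum_distrib_left algebra_simps)
    also have "\<dots> \<le> c k0 * (\<Sum>l\<in>UNIV. M k0 l * y l)"
      using M c ry by (intro mult_left_mono sum_mono) auto
    also have "\<dots> < y k0" by (rule super)
    finally show False using u[of k0] by (simp add: r_def)
  qed
  then show ?thesis using ry[of k] u[of k] by (meson less_le_trans mult_pos_pos)
qed

section \<open>Uniqueness of the solution in the upper half-plane\<close>

lemma sum_sqrt_mult_le:
  fixes a b :: "'k \<Rightarrow> real"
  assumes "\<And>l. 0 \<le> a l" "\<And>l. 0 \<le> b l"
  shows "(\<Sum>l\<in>A. sqrt (a l * b l)) \<le> sqrt (\<Sum>l\<in>A. a l) * sqrt (\<Sum>l\<in>A. b l)"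
proof -
  have "(\<Sum>l\<in>A. sqrt (a l) * sqrt (b l))\<^sup>2 \<le> (\<Sum>l\<in>A. (sqrt (a l))\<^sup>2) * (\<Sum>l\<in>A. (sqrt (b l))\<^sup>2)"
    by (rule Cauchy_Schwarz_ineq_sum)
  also have "\<dots> = (sqrt (\<Sum>l\<in>A. a l) * sqrt (\<Sum>l\<in>A. b l))\<^sup>2"
    using assms by (simp add: power_mult_distrib sum_nonneg)
  finally show ?thesis
    using assms by (simp add: power2_le_iff_abs_le sum_nonneg real_sqrt_mult)
qed

lemma qve_Im:
  assumes "solves_qve M z g"
  shows "Im (g $ k) = (cmod (g $ k))\<^sup>2 * ((\<Sum>l\<in>UNIV. M k l * Im (g $ l)) - Im z)"
    and "g $ k \<noteq> 0"
proof -
  define c where "c = (\<Sum>l\<in>UNIV. complex_of_real (M k l) * (g $ l - 1))"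
  have gc: "g $ k * (z - c) = 1" using assms by (simp add: solves_qve_def c_def algebra_simps)
  then show "g $ k \<noteq> 0" by auto
  have "cnj (g $ k) = (g $ k * cnj (g $ k)) * (z - c)"
    by (metis gc mult.assoc mult.commute mult.right_neutral)
  also have "\<dots> = complex_of_real ((cmod (g $ k))\<^sup>2) * (z - c)"
    by (subst complex_norm_square) simp
  finally have "Im (cnj (g $ k)) = (cmod (g $ k))\<^sup>2 * (Im z - Im c)" by simp
  moreover have "Im c = (\<Sum>l\<in>UNIV. M k l * Im (g $ l))" by (simp add: c_def Im_sum)
  ultimately show "Im (g $ k) = (cmod (g $ k))\<^sup>2 * ((\<Sum>l\<in>UNIV. M k l * Im (g $ l)) - Im z)"
    by (simp add: algebra_simps)
qed

lemma qve_Im_strict: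
  assumes "solves_qve M z g" and "Im z < 0"
  shows "(cmod (g $ k))\<^sup>2 * (\<Sum>l\<in>UNIV. M k l * Im (g $ l)) < Im (g $ k)"
proof -
  have "0 < (cmod (g $ k))\<^sup>2" using qve_Im(2)[OF assms(1)] by simp
  then have "(cmod (g $ k))\<^sup>2 * Im z < 0" using assms(2) by (rule mult_pos_neg)
  with qve_Im(1)[OF assms(1), of k] show ?thesis by (simp add: right_diff_distrib)
qed

lemma qve_diff:
  assumes "solves_qve M z g" and "solves_qve M z h"
  shows "g $ k - h $ k = g $ k * h $ k * (\<Sum>l\<in>UNIV. complex_of_real (M k l) * (g $ l - h $ l))"
proof -
  define cg where "cg = (\<Sum>l\<in>UNIV. complex_of_real (M k l) * (g $ l - 1))"
  define ch where "ch = (\<Sum>l\<in>UNIV. complex_of_real (M k l) * (h $ l - 1))"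
  have g: "1 = z * g $ k - g $ k * cg" and h: "1 = z * h $ k - h $ k * ch"
    using assms by (simp_all add: solves_qve_def cg_def ch_def)
  have "g $ k - h $ k = g $ k * (z * h $ k - h $ k * ch) - h $ k * (z * g $ k - g $ k * cg)"
    using g h by simp
  also have "\<dots> = g $ k * h $ k * (cg - ch)" by (simp add: algebra_simps)
  also have "cg - ch = (\<Sum>l\<in>UNIV. complex_of_real (M k l) * (g $ l - h $ l))"
    unfolding cg_def ch_def sum_subtractf[symmetric] by (simp add: algebra_simps)
  finally show ?thesis .
qed

text \<open>By Cauchy--Schwarz, \<open>\<surd>(Im g * Im h)\<close> is a strict supersolution of the linearised
  equation \<open>g - h = g h M (g - h)\<close>.\<close>
lemma qve_sqrt_Im_strict_supersolution:
  fixes M :: "'k::finite \<Rightarrow> 'k \<Rightarrow> real"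
  assumes M: "\<And>k l. 0 \<le> M k l" and z: "Im z < 0"
    and g: "solves_qve M z g" "\<And>k. 0 < Im (g $ k)" and h: "solves_qve M z h" "\<And>k. 0 < Im (h $ k)"
  shows "cmod (g $ k) * cmod (h $ k) * (\<Sum>l\<in>UNIV. M k l * sqrt (Im (g $ l) * Im (h $ l)))
    < sqrt (Im (g $ k) * Im (h $ k))"
proof -
  define Mg where "Mg = (\<Sum>l\<in>UNIV. M k l * Im (g $ l))"
  define Mh where "Mh = (\<Sum>l\<in>UNIV. M k l * Im (h $ l))"
  have "(\<Sum>l\<in>UNIV. M k l * sqrt (Im (g $ l) * Im (h $ l)))
      = (\<Sum>l\<in>UNIV. sqrt ((M k l * Im (g $ l)) * (M k l * Im (h $ l))))"
    using M by (intro sum.cong) (auto simp: real_sqrt_mult)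
  also have "\<dots> \<le> sqrt Mg * sqrt Mh"
    unfolding Mg_def Mh_def using M g(2) h(2)
    by (intro sum_sqrt_mult_le mult_nonneg_nonneg) (auto intro: less_imp_le)
  finally have "cmod (g $ k) * cmod (h $ k) * (\<Sum>l\<in>UNIV. M k l * sqrt (Im (g $ l) * Im (h $ l)))
      \<le> cmod (g $ k) * cmod (h $ k) * (sqrt Mg * sqrt Mh)"
    by (simp add: mult_left_mono)
  also have "\<dots> = sqrt ((cmod (g $ k))\<^sup>2 * Mg) * sqrt ((cmod (h $ k))\<^sup>2 * Mh)"
    by (simp add: real_sqrt_mult)
  also have "\<dots> < sqrt (Im (g $ k)) * sqrt (Im (h $ k))"
  proof (rule mult_strict_mono)
    show "sqrt ((cmod (g $ k))\<^sup>2 * Mg) < sqrt (Im (g $ k))"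
      using qve_Im_strict[OF g(1) z, of k] by (simp add: Mg_def)
    show "sqrt ((cmod (h $ k))\<^sup>2 * Mh) < sqrt (Im (h $ k))"
      using qve_Im_strict[OF h(1) z, of k] by (simp add: Mh_def)
    have "0 \<le> Mh" using M h(2) unfolding Mh_def by (auto intro!: sum_nonneg simp: less_imp_le)
    then show "0 \<le> sqrt ((cmod (h $ k))\<^sup>2 * Mh)" by simp
  qed (use g(2) in simp)
  finally show ?thesis by (simp add: real_sqrt_mult)
qed

lemma qve_unique:
  fixes M :: "'k::finite \<Rightarrow> 'k \<Rightarrow> real"
  assumes M: "\<And>k l. 0 \<le> M k l" and z: "Im z < 0"
    and g: "solves_qve M z g" "\<And>k. 0 < Im (g $ k)" and h: "solves_qve M z h" "\<And>k. 0 < Im (h $ k)"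
  shows "g = h"
proof -
  have "cmod (g $ k - h $ k) = 0" for k
  proof (rule subsolution_eq_zero[OF M _ _ qve_sqrt_Im_strict_supersolution[OF M z g h]])
    fix k
    have "cmod (g $ k - h $ k)
        = cmod (g $ k) * cmod (h $ k) * cmod (\<Sum>l\<in>UNIV. complex_of_real (M k l) * (g $ l - h $ l))"
      by (subst qve_diff[OF g(1) h(1)]) (simp add: norm_mult)
    also have "cmod (\<Sum>l\<in>UNIV. complex_of_real (M k l) * (g $ l - h $ l))
        \<le> (\<Sum>l\<in>UNIV. M k l * cmod (g $ l - h $ l))"
      by (rule order_trans[OF norm_sum]) (simp add: norm_mult M)
    finally show "cmod (g $ k - h $ k)
        \<le> cmod (g $ k) * cmod (h $ k) * (\<Sum>l\<in>UNIV. M k l * cmod (g $ l - h $ l))"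
      by (simp add: mult_left_mono)
  qed (use g(2) h(2) in simp_all)
  then show ?thesis by (simp add: vec_eq_iff)
qed

lemma qve_Im_pos:
  fixes M :: "'k::finite \<Rightarrow> 'k \<Rightarrow> real"
  assumes M: "\<And>k l. 0 \<le> M k l" and z: "Im z < 0" and g: "solves_qve M z g"
    and u: "\<And>k. 0 < u k" and super: "\<And>k. (cmod (g $ k))\<^sup>2 * (\<Sum>l\<in>UNIV. M k l * u l) \<le> u k"
  shows "0 < Im (g $ k)"
proof (rule strict_supersolution_pos[where c="\<lambda>k. (cmod (g $ k))\<^sup>2"])
  show "(cmod (g $ k))\<^sup>2 * (\<Sum>l\<in>UNIV. M k l * Im (g $ l)) < Im (g $ k)" for k
    by (rule qve_Im_strict[OF g z])
qed (fact M u super zero_le_power2)+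

section \<open>A positive real solution at \<open>z = 1\<close>\<close>

lemma inner_matrix_vector_mult_symmetric:
  fixes A :: "real ^ 'k ^ 'k"
  assumes "transpose A = A"
  shows "inner (A *v x) y = inner x (A *v y)"
  by (metis assms dot_lmul_matrix vector_transpose_matrix)

lemma finite_eigenvalues_symmetric:
  fixes A :: "real ^ 'k ^ 'k"
  assumes sym: "transpose A = A"
  shows "finite {l. \<exists>v. v \<noteq> 0 \<and> A *v v = l *\<^sub>R v}"
proof -
  define E where "E = {l. \<exists>v. v \<noteq> 0 \<and> A *v v = l *\<^sub>R v}"
  define ev where "ev l = (SOME v. v \<noteq> 0 \<and> A *v v = l *\<^sub>R v)" for l
  have ev: "ev l \<noteq> 0 \<and> A *v ev l = l *\<^sub>R ev l" if "l \<in> E" for l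
    using that unfolding E_def ev_def mem_Collect_eq by (rule someI_ex)
  have inj: "inj_on ev E"
  proof (rule inj_onI)
    fix a b assume a: "a \<in> E" and b: "b \<in> E" and e: "ev a = ev b"
    have "a *\<^sub>R ev a = b *\<^sub>R ev a" using ev[OF a] ev[OF b] e by metis
    then have "(a - b) *\<^sub>R ev a = 0" by (simp add: scaleR_diff_left)
    then show "a = b" using ev[OF a] by simp
  qed
  have "pairwise orthogonal (ev ` E)"
  proof (clarsimp simp: pairwise_def)
    fix a b assume a: "a \<in> E" and b: "b \<in> E" and ne: "ev a \<noteq> ev b"
    have "a * inner (ev a) (ev b) = inner (A *v ev a) (ev b)" using ev[OF a] by simp
    also have "\<dots> = inner (ev a) (A *v ev b)" by (rule inner_matrix_vector_mult_symmetric[OF sym])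
    also have "\<dots> = b * inner (ev a) (ev b)" using ev[OF b] by simp
    finally show "orthogonal (ev a) (ev b)" using ne by (auto simp: orthogonal_def)
  qed
  moreover have "0 \<notin> ev ` E" using ev by auto
  ultimately have "finite (ev ` E)"
    using pairwise_orthogonal_independent independent_bound by blast
  then show ?thesis using inj finite_imageD unfolding E_def by blast
qed

lemma compact_simplex: "compact {x :: real ^ 'k. (\<forall>i. 0 \<le> x $ i) \<and> (\<Sum>i\<in>UNIV. x $ i) = 1}"
  (is "compact ?\<Delta>")
proof -
  have "?\<Delta> \<subseteq> cbox 0 1"
  proof
    fix x assume x: "x \<in> ?\<Delta>"
    have "x $ i \<le> (\<Sum>i\<in>UNIV. x $ i)" for i by (rule member_le_sum) (use x in auto)
    then show "x \<in> cbox 0 1" using x by (auto simp: mem_box_cart)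
  qed
  moreover have "closed ?\<Delta>"
    by (intro closed_Collect_conj closed_Collect_all closed_Collect_le closed_Collect_eq continuous_intros)
  ultimately show ?thesis by (meson bounded_cbox bounded_subset compact_eq_bounded_closed)
qed

lemma convex_simplex: "convex {x :: real ^ 'k. (\<forall>i. 0 \<le> x $ i) \<and> (\<Sum>i\<in>UNIV. x $ i) = 1}"
proof (rule convexI)
  fix x y :: "real ^ 'k" and a b :: real
  assume x: "x \<in> {x. (\<forall>i. 0 \<le> x $ i) \<and> (\<Sum>i\<in>UNIV. x $ i) = 1}"
    and y: "y \<in> {x. (\<forall>i. 0 \<le> x $ i) \<and> (\<Sum>i\<in>UNIV. x $ i) = 1}"
    and ab: "0 \<le> a" "0 \<le> b" "a + b = 1"
  have "(\<Sum>i\<in>UNIV. (a *\<^sub>R x + b *\<^sub>R y) $ i) = a * (\<Sum>i\<in>UNIV. x $ i) + b * (\<Sum>i\<in>UNIV. y $ i)"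
    by (simp add: sum.distrib sum_distrib_left)
  then show "a *\<^sub>R x + b *\<^sub>R y \<in> {x. (\<forall>i. 0 \<le> x $ i) \<and> (\<Sum>i\<in>UNIV. x $ i) = 1}"
    using x y ab by simp
qed

text \<open>Perron: Brouwer's theorem for \<open>x \<mapsto> A x / \<Sum>(A x)\<close> on the standard simplex.\<close>
lemma positive_matrix_has_eigenvector:
  fixes A :: "real ^ 'k ^ 'k"
  assumes pos: "\<And>i j. 0 < A $ i $ j"
  shows "\<exists>l v. v \<noteq> 0 \<and> A *v v = l *\<^sub>R v"
proof -
  define \<Delta> where "\<Delta> = {x::real^'k. (\<forall>i. 0 \<le> x $ i) \<and> (\<Sum>i\<in>UNIV. x $ i) = 1}"
  define s where "s x = (\<Sum>i\<in>UNIV. (A *v x) $ i)" for x :: "real^'k"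
  define f where "f x = inverse (s x) *\<^sub>R (A *v x)" for x
  have Ax_pos: "0 < (A *v x) $ i" if "x \<in> \<Delta>" for x i
  proof -
    from that have x0: "\<And>j. 0 \<le> x $ j" and x1: "(\<Sum>j\<in>UNIV. x $ j) = 1" by (auto simp: \<Delta>_def)
    obtain j0 where "x $ j0 \<noteq> 0" using x1 by (metis sum.neutral zero_neq_one)
    then have "0 < A $ i $ j0 * x $ j0" using pos x0[of j0] by simp
    also have "\<dots> \<le> (\<Sum>j\<in>UNIV. A $ i $ j * x $ j)"
      by (rule member_le_sum) (auto intro: mult_nonneg_nonneg less_imp_le pos x0)
    also have "\<dots> = (A *v x) $ i" by (simp add: matrix_vector_mult_def)
    finally show ?thesis .
  qed
  have s_pos: "0 < s x" if "x \<in> \<Delta>" for x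
    unfolding s_def by (rule sum_pos) (simp_all add: Ax_pos[OF that])
  have "compact \<Delta>" "convex \<Delta>" unfolding \<Delta>_def by (rule compact_simplex convex_simplex)+
  moreover have "axis i 1 \<in> \<Delta>" for i by (simp add: \<Delta>_def axis_def)
  then have "\<Delta> \<noteq> {}" by blast
  moreover have "continuous_on \<Delta> f"
    unfolding f_def s_def using s_pos by (intro continuous_intros) (force simp: s_def)
  moreover have "f \<in> \<Delta> \<rightarrow> \<Delta>"
  proof
    fix x assume x: "x \<in> \<Delta>"
    have "(\<Sum>i\<in>UNIV. f x $ i) = 1"
      using s_pos[OF x] by (simp add: f_def s_def sum_distrib_left[symmetric])
    then show "f x \<in> \<Delta>"
      using Ax_pos[OF x] s_pos[OF x] by (simp add: \<Delta>_def f_def less_imp_le)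
  qed
  ultimately obtain x where x: "x \<in> \<Delta>" "f x = x" by (rule brouwer)
  have "x \<noteq> 0" using x(1) by (auto simp: \<Delta>_def)
  moreover have "A *v x = s x *\<^sub>R x"
  proof -
    have "A *v x = s x *\<^sub>R f x" using s_pos[OF x(1)] by (simp add: f_def)
    then show ?thesis using x(2) by simp
  qed
  ultimately show ?thesis by blast
qed

lemma largest_eigenvalue_has_eigenvector:
  fixes A :: "real ^ 'k ^ 'k"
  assumes "transpose A = A" and "\<And>i j. 0 < A $ i $ j"
  obtains v where "v \<noteq> 0" and "A *v v = largest_eigenvalue A *\<^sub>R v"
proof -
  define E where "E = {l. \<exists>v. v \<noteq> 0 \<and> A *v v = l *\<^sub>R v}"
  have "finite E" unfolding E_def by (rule finite_eigenvalues_symmetric[OF assms(1)])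
  moreover have "E \<noteq> {}" using positive_matrix_has_eigenvector[OF assms(2)] by (auto simp: E_def)
  ultimately have "largest_eigenvalue A \<in> E" unfolding largest_eigenvalue_def E_def[symmetric] by (rule Max_in)
  then show ?thesis using that by (auto simp: E_def)
qed

text \<open>The entrywise absolute value of an eigenvector, pushed through the positive matrix once,
  becomes a strictly positive super-eigenvector.\<close>
lemma positive_supereigenvector:
  fixes A :: "real ^ 'k ^ 'k"
  assumes pos: "\<And>i j. 0 < A $ i $ j" and l: "0 \<le> l" and x: "x \<noteq> 0" "A *v x = l *\<^sub>R x"
  obtains v where "\<And>k. 0 < v $ k" and "\<And>k. l * v $ k \<le> (A *v v) $ k"
proof
  define v where "v = A *v (\<chi> j. \<bar>x $ j\<bar>)"
  have lx: "l * \<bar>x $ k\<bar> \<le> v $ k" for k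
  proof -
    have "l * \<bar>x $ k\<bar> = \<bar>\<Sum>j\<in>UNIV. A $ k $ j * x $ j\<bar>"
      using arg_cong[OF x(2), of "\<lambda>y. \<bar>y $ k\<bar>"] l by (simp add: abs_mult matrix_vector_mult_def)
    also have "\<dots> \<le> (\<Sum>j\<in>UNIV. \<bar>A $ k $ j * x $ j\<bar>)" by (rule sum_abs)
    also have "\<dots> = v $ k" using pos by (simp add: v_def matrix_vector_mult_def abs_mult less_imp_le)
    finally show ?thesis .
  qed
  obtain j0 where j0: "x $ j0 \<noteq> 0" using x(1) by (metis vec_eq_iff zero_index)
  show "0 < v $ k" for k
  proof -
    have "0 < A $ k $ j0 * \<bar>x $ j0\<bar>" using pos j0 by simp
    also have "\<dots> \<le> v $ k"
      unfolding v_def matrix_vector_mult_def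
      using member_le_sum[of j0 UNIV "\<lambda>j. A $ k $ j * \<bar>x $ j\<bar>"] pos
      by (simp add: less_imp_le)
    finally show ?thesis .
  qed
  show "l * v $ k \<le> (A *v v) $ k" for k
  proof -
    have "l * v $ k = (\<Sum>j\<in>UNIV. A $ k $ j * (l * \<bar>x $ j\<bar>))"
      by (simp add: v_def matrix_vector_mult_def sum_distrib_left algebra_simps)
    also have "\<dots> \<le> (\<Sum>j\<in>UNIV. A $ k $ j * v $ j)"
      using pos by (intro sum_mono mult_left_mono lx) (simp add: less_imp_le)
    finally show ?thesis by (simp add: matrix_vector_mult_def)
  qed
qed

text \<open>Brouwer's theorem for \<open>w \<mapsto> M w / (1 + M w)\<close> on the box \<open>[a, 1]\<close>, which this monotone
  map sends into itself.\<close>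
lemma qve_real_solution_above:
  fixes M :: "'k::finite \<Rightarrow> 'k \<Rightarrow> real" and a :: "'k \<Rightarrow> real"
  assumes M: "\<And>k l. 0 \<le> M k l" and a: "\<And>k. 0 < a k" "\<And>k. a k \<le> 1"
    and sub: "\<And>k. a k * (1 + (\<Sum>l\<in>UNIV. M k l * a l)) \<le> (\<Sum>l\<in>UNIV. M k l * a l)"
  obtains u where "\<And>k. a k \<le> u k" "\<And>k. u k < 1" "\<And>k. u k = (1 - u k) * (\<Sum>l\<in>UNIV. M k l * u l)"
proof -
  define T where "T w k = (\<Sum>l\<in>UNIV. M k l * w $ l)" for w :: "real ^ 'k" and k
  define F where "F w = (\<chi> k. T w k / (1 + T w k))" for w
  define B where "B = cbox (\<chi> k. a k) (1 :: real ^ 'k)"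
  have a_B: "(\<chi> k. a k) \<in> B" using a by (simp add: B_def mem_box_cart less_imp_le)
  have T_mono: "T (\<chi> k. a k) k \<le> T w k" if "w \<in> B" for w k
    unfolding T_def using that M by (intro sum_mono mult_left_mono) (auto simp: B_def mem_box_cart)
  have T_nonneg: "0 \<le> T w k" if "w \<in> B" for w k
  proof -
    have "0 \<le> T (\<chi> k. a k) k" unfolding T_def using M a by (auto intro!: sum_nonneg simp: less_imp_le)
    then show ?thesis using T_mono[OF that, of k] by linarith
  qed
  have "compact B" "convex B" by (simp_all add: B_def compact_cbox)
  moreover have "B \<noteq> {}" using a_B by blast
  moreover have "continuous_on B F"
    unfolding F_def T_def
  proof (intro continuous_intros ballI)
    show "1 + (\<Sum>l\<in>UNIV. M k l * w $ l) \<noteq> 0" if "w \<in> B" for w k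
      using T_nonneg[OF that, of k] by (simp add: T_def)
  qed
  moreover have "F \<in> B \<rightarrow> B"
  proof
    fix w assume w: "w \<in> B"
    have "a k \<le> F w $ k \<and> F w $ k \<le> 1" for k
    proof -
      have "a k \<le> T (\<chi> k. a k) k / (1 + T (\<chi> k. a k) k)"
        using sub[of k] T_nonneg[OF a_B, of k] by (simp add: T_def pos_le_divide_eq)
      also have "\<dots> \<le> T w k / (1 + T w k)"
        using T_mono[OF w, of k] T_nonneg[OF a_B, of k] by (simp add: frac_le field_simps)
      finally show ?thesis using T_nonneg[OF w, of k] by (simp add: F_def)
    qed
    then show "F w \<in> B" by (simp add: B_def mem_box_cart)
  qed
  ultimately obtain w where w: "w \<in> B" "F w = w" by (rule brouwer)
  show ?thesis
  proof
    fix k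
    have "w $ k = F w $ k" by (simp add: w(2))
    then have wk: "w $ k = T w k / (1 + T w k)" by (simp add: F_def)
    show "a k \<le> w $ k" using w(1) by (simp add: B_def mem_box_cart)
    show "w $ k < 1" using T_nonneg[OF w(1), of k] by (simp add: wk)
    show "w $ k = (1 - w $ k) * (\<Sum>l\<in>UNIV. M k l * w $ l)"
      using T_nonneg[OF w(1), of k] by (simp add: wk field_simps T_def)
  qed
qed

lemma qve_real_solution_of_supereigenvector:
  fixes M :: "'k::finite \<Rightarrow> 'k \<Rightarrow> real"
  assumes M: "\<And>k l. 0 \<le> M k l" and u0: "\<And>k. 0 < u0 k" and l: "1 < l"
    and super: "\<And>k. l * u0 k \<le> (\<Sum>j\<in>UNIV. M k j * u0 j)"
  obtains u where "\<And>k. 0 < u k" "\<And>k. u k < 1" "\<And>k. u k = (1 - u k) * (\<Sum>j\<in>UNIV. M k j * u j)"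
proof -
  define T where "T k = (\<Sum>j\<in>UNIV. M k j * u0 j)" for k
  obtain kb where kb: "\<And>k. u0 k + T k \<le> u0 kb + T kb"
    using finite_UNIV_argmax[of "\<lambda>k. u0 k + T k"] by blast
  define B where "B = u0 kb + T kb"
  have T0: "0 \<le> T k" for k using M u0 by (auto simp: T_def intro!: sum_nonneg simp: less_imp_le)
  have B0: "0 < B" using u0[of kb] T0[of kb] by (simp add: B_def)
  define \<epsilon> where "\<epsilon> = min 1 (l - 1) / B"
  have \<epsilon>0: "0 < \<epsilon>" using l B0 by (simp add: \<epsilon>_def)
  have \<epsilon>B: "\<epsilon> * u0 k \<le> min 1 (l - 1) \<and> \<epsilon> * T k \<le> min 1 (l - 1)" for k
  proof -
    have "\<epsilon> * u0 k \<le> \<epsilon> * B" "\<epsilon> * T k \<le> \<epsilon> * B"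
      using kb[of k] u0[of k] T0[of k] \<epsilon>0 by (simp_all add: B_def)
    then show ?thesis using B0 by (simp add: \<epsilon>_def)
  qed
  have MT: "(\<Sum>j\<in>UNIV. M k j * (\<epsilon> * u0 j)) = \<epsilon> * T k" for k
    by (simp add: T_def sum_distrib_left mult_ac)
  obtain u where u: "\<And>k. \<epsilon> * u0 k \<le> u k" "\<And>k. u k < 1"
    "\<And>k. u k = (1 - u k) * (\<Sum>j\<in>UNIV. M k j * u j)"
  proof (rule qve_real_solution_above[OF M, of "\<lambda>k. \<epsilon> * u0 k"])
    fix k
    show "0 < \<epsilon> * u0 k" using \<epsilon>0 u0[of k] by simp
    show "\<epsilon> * u0 k \<le> 1" using \<epsilon>B[of k] by simp
    have "\<epsilon> * u0 k * (1 + \<epsilon> * T k) \<le> \<epsilon> * u0 k * l"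
      using \<epsilon>B[of k] \<epsilon>0 u0[of k] by (intro mult_left_mono) auto
    also have "\<dots> \<le> \<epsilon> * T k" using super[of k] \<epsilon>0 by (simp add: T_def mult.commute)
    finally show "\<epsilon> * u0 k * (1 + (\<Sum>j\<in>UNIV. M k j * (\<epsilon> * u0 j))) \<le> (\<Sum>j\<in>UNIV. M k j * (\<epsilon> * u0 j))"
      by (simp add: MT)
  qed blast
  show ?thesis
  proof (rule that)
    show "0 < u k" for k using u(1)[of k] \<epsilon>0 u0[of k] by (meson less_le_trans mult_pos_pos)
  qed (fact u)+
qed

lemma QVE_real_solution_exists:
  fixes rho :: "real ^ 'k" and S :: "real ^ 'k ^ 'k"
  assumes rho_pos: "\<And>k. 0 < rho $ k"
    and S_sym: "transpose S = S" and S_pos: "\<And>k l. 0 < S $ k $ l"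
    and lam: "largest_eigenvalue (Omega_K rho S) > 1"
  obtains u where "\<And>k. 0 < u k" "\<And>k. u k < 1"
    "\<And>k. u k = (1 - u k) * (\<Sum>j\<in>UNIV. S $ k $ j * rho $ j * u j)"
proof -
  define \<Omega> where "\<Omega> = Omega_K rho S"
  define l where "l = largest_eigenvalue \<Omega>"
  have \<Omega>_pos: "0 < \<Omega> $ i $ j" for i j using rho_pos S_pos by (simp add: \<Omega>_def Omega_K_nth)
  have l: "1 < l" using lam by (simp add: l_def \<Omega>_def)
  obtain x where x: "x \<noteq> 0" "\<Omega> *v x = l *\<^sub>R x"
    using largest_eigenvalue_has_eigenvector[OF transpose_Omega_K[OF S_sym, where rho=rho, folded \<Omega>_def] \<Omega>_pos]
    unfolding l_def by blast
  have "0 \<le> l" using l by simp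
  then obtain v where v: "\<And>k. 0 < v $ k" "\<And>k. l * v $ k \<le> (\<Omega> *v v) $ k"
    using positive_supereigenvector[OF \<Omega>_pos _ x] by blast
  show ?thesis
  proof (rule qve_real_solution_of_supereigenvector[of "\<lambda>k j. S $ k $ j * rho $ j" "\<lambda>k. v $ k / sqrt (rho $ k)" l])
    show "0 \<le> S $ k $ j * rho $ j" for k j using S_pos[of k j] rho_pos[of j] by simp
    show "0 < v $ k / sqrt (rho $ k)" for k using v(1) rho_pos by simp
    show "1 < l" by (fact l)
    show "l * (v $ k / sqrt (rho $ k)) \<le> (\<Sum>j\<in>UNIV. S $ k $ j * rho $ j * (v $ j / sqrt (rho $ j)))"
      (is "_ \<le> ?Mu") for k
    proof -
      have "l * v $ k \<le> sqrt (rho $ k) * ?Mu"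
        using v(2)[of k] Omega_K_mult_vector[OF rho_pos, of S v k] by (simp add: \<Omega>_def)
      then show ?thesis using rho_pos[of k] by (simp add: pos_divide_le_eq mult.commute)
    qed
  qed (use that in blast)
qed

section \<open>Continuity of the solution at \<open>z = 1\<close>\<close>

lemma inverse_perturbation_le:
  fixes \<gamma> \<theta> c :: real and Y :: complex
  assumes \<gamma>: "0 < \<gamma>" "\<gamma> \<le> \<theta>" and \<theta>: "\<theta> < 1" and c: "0 < c" "c \<le> (1 - \<theta>) / 4"
    and Y: "\<gamma> * cmod Y \<le> (1 + (1 - \<theta>) / 4) * c"
  shows "of_real (1 / \<gamma>) + Y \<noteq> 0" and "cmod (1 / (of_real (1 / \<gamma>) + Y) - of_real \<gamma>) \<le> c"
proof -
  define a where "a = (1 - \<theta>) / 4"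
  define r where "r = \<gamma> * cmod Y"
  have a: "0 < a" "\<theta> = 1 - 4 * a" using \<theta> by (simp_all add: a_def field_simps)
  have r0: "0 \<le> r" using \<gamma> by (simp add: r_def)
  have ca: "c \<le> a" and rc: "r \<le> (1 + a) * c" using c(2) Y by (simp_all add: a_def r_def)
  have "(\<theta> + c) * r \<le> (1 - 3 * a) * ((1 + a) * c)"
    using ca rc r0 a \<gamma> by (intro mult_mono) linarith+
  also have "\<dots> = c - (2 * a + 3 * a\<^sup>2) * c" by (simp add: algebra_simps power2_eq_square)
  also have "\<dots> < c" using a c by (simp add: add_pos_nonneg)
  finally have key: "\<theta> * r < c * (1 - r)" by (simp add: distrib_right right_diff_distrib)
  have "0 \<le> \<theta> * r" using \<gamma> r0 by simp
  then have "0 < c * (1 - r)" using key by linarith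
  then have r1: "r < 1" using c by (simp add: zero_less_mult_iff)
  define W where "W = 1 + of_real \<gamma> * Y"
  have W: "1 - r \<le> cmod W"
    using norm_diff_ineq[of 1 "of_real \<gamma> * Y"] \<gamma> by (simp add: W_def r_def norm_mult)
  then have W0: "W \<noteq> 0" using r1 by auto
  have eq: "of_real (1 / \<gamma>) + Y = W / of_real \<gamma>" using \<gamma> by (simp add: W_def field_simps)
  then show "of_real (1 / \<gamma>) + Y \<noteq> 0" using W0 \<gamma> by simp
  have "1 / (of_real (1 / \<gamma>) + Y) - of_real \<gamma> = - of_real \<gamma> * (of_real \<gamma> * Y) / W"
    using W0 \<gamma> by (simp add: eq W_def field_simps)
  then have "cmod (1 / (of_real (1 / \<gamma>) + Y) - of_real \<gamma>) = \<gamma> * r / cmod W"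
    using \<gamma> by (simp add: norm_mult norm_divide r_def)
  also have "\<dots> \<le> \<gamma> * r / (1 - r)"
    using W r0 r1 \<gamma> by (intro divide_left_mono mult_pos_pos) auto
  also have "\<dots> \<le> \<theta> * r / (1 - r)" using \<gamma> r0 r1 by (intro divide_right_mono mult_right_mono) auto
  also have "\<dots> \<le> c" using key r1 by (simp add: pos_divide_le_eq)
  finally show "cmod (1 / (of_real (1 / \<gamma>) + Y) - of_real \<gamma>) \<le> c" .
qed

lemma norm_le_sum_norm_nth: "norm (x :: 'a::real_normed_vector ^ 'k) \<le> (\<Sum>k\<in>UNIV. norm (x $ k))"
  by (simp add: norm_vec_def L2_set_le_sum)

lemma dist_le_card_mult_nth:
  fixes x y :: "'a::real_normed_vector ^ 'k"
  assumes "\<And>k. dist (x $ k) (y $ k) \<le> r"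
  shows "dist x y \<le> real CARD('k) * r"
proof -
  have "dist x y \<le> (\<Sum>k\<in>UNIV. dist (x $ k) (y $ k))"
    using norm_le_sum_norm_nth[of "x - y"] by (simp add: dist_norm)
  also have "\<dots> \<le> (\<Sum>k\<in>(UNIV :: 'k set). r)" by (intro sum_mono assms)
  finally show ?thesis by simp
qed

lemma compact_polydisc: "compact {g :: complex ^ 'k. \<forall>k. cmod (g $ k - c $ k) \<le> r k}"
proof -
  have "{g :: complex ^ 'k. \<forall>k. cmod (g $ k - c $ k) \<le> r k} \<subseteq> cball c (\<Sum>k\<in>UNIV. r k)"
  proof
    fix g :: "complex ^ 'k" assume g: "g \<in> {g. \<forall>k. cmod (g $ k - c $ k) \<le> r k}"
    have "norm (g - c) \<le> (\<Sum>k\<in>UNIV. norm ((g - c) $ k))" by (rule norm_le_sum_norm_nth)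
    also have "\<dots> \<le> (\<Sum>k\<in>UNIV. r k)" using g by (intro sum_mono) simp
    finally show "g \<in> cball c (\<Sum>k\<in>UNIV. r k)" by (simp add: dist_norm norm_minus_commute)
  qed
  moreover have "closed {g :: complex ^ 'k. \<forall>k. cmod (g $ k - c $ k) \<le> r k}"
    by (intro closed_Collect_all closed_Collect_le continuous_intros)
  ultimately show ?thesis by (meson bounded_cball bounded_subset compact_eq_bounded_closed)
qed

lemma convex_polydisc: "convex {g :: complex ^ 'k. \<forall>k. cmod (g $ k - c $ k) \<le> r k}"
proof (rule convexI, clarsimp)
  fix x y :: "complex ^ 'k" and a b :: real and k
  assume x: "\<forall>k. cmod (x $ k - c $ k) \<le> r k" and y: "\<forall>k. cmod (y $ k - c $ k) \<le> r k"
    and ab: "0 \<le> a" "0 \<le> b" "a + b = 1"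
  have "a *\<^sub>R x $ k + b *\<^sub>R y $ k - c $ k = a *\<^sub>R (x $ k - c $ k) + b *\<^sub>R (y $ k - c $ k)"
    using ab by (simp add: algebra_simps flip: scaleR_add_left)
  also have "cmod \<dots> \<le> a * cmod (x $ k - c $ k) + b * cmod (y $ k - c $ k)"
    using ab by (metis abs_of_nonneg norm_scaleR norm_triangle_ineq)
  also have "\<dots> \<le> a * r k + b * r k" using x y ab by (intro add_mono mult_left_mono) auto
  also have "\<dots> = r k" using ab by (simp flip: distrib_right)
  finally show "cmod (a *\<^sub>R x $ k + b *\<^sub>R y $ k - c $ k) \<le> r k" .
qed

lemma qve_denominator_split:
  fixes M :: "'k::finite \<Rightarrow> 'k \<Rightarrow> real" and \<gamma> u :: "'k \<Rightarrow> real" and g :: "complex ^ 'k"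
  assumes \<gamma>: "0 < \<gamma> k" and u: "\<And>l. \<gamma> l + u l = 1"
    and Mu: "(\<Sum>l\<in>UNIV. M k l * u l) = u k / \<gamma> k"
  shows "z - (\<Sum>l\<in>UNIV. complex_of_real (M k l) * (g $ l - 1))
    = of_real (1 / \<gamma> k) + ((z - 1) - (\<Sum>l\<in>UNIV. complex_of_real (M k l) * (g $ l - \<gamma> l)))"
proof -
  have "(\<Sum>l\<in>UNIV. complex_of_real (M k l) * (g $ l - 1))
      = (\<Sum>l\<in>UNIV. complex_of_real (M k l) * (g $ l - \<gamma> l) - of_real (M k l * u l))"
  proof (rule sum.cong)
    fix l
    have "1 - \<gamma> l = u l" using u[of l] by linarith
    then have "1 - complex_of_real (\<gamma> l) = of_real (u l)" by (metis of_real_1 of_real_diff)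
    moreover have "complex_of_real (M k l) * (g $ l - 1)
        = complex_of_real (M k l) * (g $ l - \<gamma> l) - of_real (M k l) * (1 - of_real (\<gamma> l))"
      by (simp add: algebra_simps)
    ultimately show "complex_of_real (M k l) * (g $ l - 1)
        = complex_of_real (M k l) * (g $ l - \<gamma> l) - of_real (M k l * u l)" by simp
  qed simp
  also have "\<dots> = (\<Sum>l\<in>UNIV. complex_of_real (M k l) * (g $ l - \<gamma> l)) - of_real (1 / \<gamma> k - 1)"
  proof -
    have "u k / \<gamma> k = 1 / \<gamma> k - 1" using u[of k] \<gamma> by (simp add: field_simps)
    then show ?thesis unfolding sum_subtractf of_real_sum[symmetric] Mu by simp
  qed
  finally show ?thesis by simp
qed

text \<open>Near \<open>z = 1\<close>, the map \<open>g \<mapsto> 1 / (z - M (g - 1))\<close> sends a small polydisc around the real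
  solution \<open>\<gamma> = 1 - u\<close> of the equation at \<open>z = 1\<close> into itself; its radii are proportional to \<open>u\<close>
  because \<open>M u = u / \<gamma>\<close>.\<close>
lemma qve_resolvent_in_polydisc:
  fixes M :: "'k::finite \<Rightarrow> 'k \<Rightarrow> real" and \<gamma> u :: "'k \<Rightarrow> real" and g :: "complex ^ 'k"
  assumes M: "\<And>k l. 0 \<le> M k l"
    and \<gamma>: "\<And>k. 0 < \<gamma> k" "\<And>k. \<gamma> k \<le> \<theta>" "\<theta> < 1"
    and u: "\<And>k. 0 < u k" "\<And>k. \<gamma> k + u k = 1" "\<And>k. u k = \<gamma> k * (\<Sum>l\<in>UNIV. M k l * u l)"
    and d: "0 < d" "d \<le> (1 - \<theta>) / 4"
    and z: "\<And>k. cmod (z - 1) \<le> (1 - \<theta>) / 4 * d * u k"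
    and g: "\<And>l. cmod (g $ l - \<gamma> l) \<le> d * u l"
  shows "z - (\<Sum>l\<in>UNIV. complex_of_real (M k l) * (g $ l - 1)) \<noteq> 0" (is "?D \<noteq> 0")
    and "cmod (1 / (z - (\<Sum>l\<in>UNIV. complex_of_real (M k l) * (g $ l - 1))) - \<gamma> k) \<le> d * u k"
proof -
  define Y where "Y = (z - 1) - (\<Sum>l\<in>UNIV. complex_of_real (M k l) * (g $ l - \<gamma> l))"
  have Mu: "(\<Sum>l\<in>UNIV. M k l * u l) = u k / \<gamma> k"
  proof -
    have "u k / \<gamma> k = \<gamma> k * (\<Sum>l\<in>UNIV. M k l * u l) / \<gamma> k" by (subst u(3)) simp
    then show ?thesis using \<gamma>(1)[of k] by simp
  qed
  have D_eq: "?D = of_real (1 / \<gamma> k) + Y"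
    unfolding Y_def by (rule qve_denominator_split[where \<gamma>=\<gamma> and k=k and u=u and M=M, OF \<gamma>(1)[of k] u(2) Mu])
  have "cmod (\<Sum>l\<in>UNIV. complex_of_real (M k l) * (g $ l - \<gamma> l)) \<le> (\<Sum>l\<in>UNIV. M k l * (d * u l))"
    using g M by (intro order_trans[OF norm_sum] sum_mono) (simp add: norm_mult mult_left_mono)
  also have "\<dots> = d * (\<Sum>l\<in>UNIV. M k l * u l)" by (simp add: sum_distrib_left mult_ac)
  also have "\<dots> = d * u k / \<gamma> k" by (simp add: Mu)
  finally have "cmod Y \<le> cmod (z - 1) + d * u k / \<gamma> k"
    unfolding Y_def by (rule order_trans[OF norm_triangle_ineq4 add_left_mono])
  then have "\<gamma> k * cmod Y \<le> \<gamma> k * cmod (z - 1) + d * u k"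
    using \<gamma>(1)[of k] mult_left_mono[of _ _ "\<gamma> k"] by (fastforce simp: distrib_left)
  also have "\<dots> \<le> cmod (z - 1) + d * u k"
    using \<gamma>(1,2)[of k] \<gamma>(3) mult_right_mono[of "\<gamma> k" 1 "cmod (z - 1)"] by simp
  also have "\<dots> \<le> (1 + (1 - \<theta>) / 4) * (d * u k)" using z[of k] by (simp add: algebra_simps)
  finally have Y: "\<gamma> k * cmod Y \<le> (1 + (1 - \<theta>) / 4) * (d * u k)" .
  have "d * u k \<le> d" using d(1) u(2)[of k] \<gamma>(1)[of k] by (intro mult_left_le) auto
  then have du: "d * u k \<le> (1 - \<theta>) / 4" using d(2) by linarith
  note perturb = inverse_perturbation_le[OF \<gamma>(1,2) \<gamma>(3) mult_pos_pos[OF d(1) u(1)] du Y]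
  show "?D \<noteq> 0" "cmod (1 / ?D - \<gamma> k) \<le> d * u k" using perturb by (simp_all add: D_eq)
qed

lemma qve_solution_in_polydisc:
  fixes M :: "'k::finite \<Rightarrow> 'k \<Rightarrow> real" and \<gamma> u :: "'k \<Rightarrow> real"
  assumes M: "\<And>k l. 0 \<le> M k l"
    and \<gamma>: "\<And>k. 0 < \<gamma> k" "\<And>k. \<gamma> k \<le> \<theta>" "\<theta> < 1"
    and u: "\<And>k. 0 < u k" "\<And>k. \<gamma> k + u k = 1" "\<And>k. u k = \<gamma> k * (\<Sum>l\<in>UNIV. M k l * u l)"
    and d: "0 < d" "d \<le> (1 - \<theta>) / 4"
    and z: "\<And>k. cmod (z - 1) \<le> (1 - \<theta>) / 4 * d * u k"
  obtains g where "solves_qve M z g" "\<And>k. cmod (g $ k - \<gamma> k) \<le> d * u k"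
proof -
  define P where "P = {g :: complex ^ 'k. \<forall>k. cmod (g $ k - (\<chi> k. complex_of_real (\<gamma> k)) $ k) \<le> d * u k}"
  define F where "F g = (\<chi> k. 1 / (z - (\<Sum>l\<in>UNIV. complex_of_real (M k l) * (g $ l - 1))))" for g
  note resolvent = qve_resolvent_in_polydisc[OF M \<gamma> u d z]
  have "compact P" "convex P" unfolding P_def by (rule compact_polydisc convex_polydisc)+
  moreover have "(\<chi> k. complex_of_real (\<gamma> k)) \<in> P" using d u(1) by (simp add: P_def less_imp_le)
  then have "P \<noteq> {}" by blast
  moreover have "continuous_on P F"
    unfolding F_def using resolvent(1) by (intro continuous_intros) (simp add: P_def)
  moreover have "F \<in> P \<rightarrow> P" using resolvent(2) by (simp add: P_def F_def)
  ultimately obtain g where g: "g \<in> P" "F g = g" by (rule brouwer)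
  show ?thesis
  proof (rule that)
    show "solves_qve M z g"
      unfolding solves_qve_def
    proof
      fix k
      define D where "D = z - (\<Sum>l\<in>UNIV. complex_of_real (M k l) * (g $ l - 1))"
      have "g $ k = F g $ k" by (simp add: g(2))
      then have "g $ k = 1 / D" by (simp add: D_def F_def)
      moreover have "D \<noteq> 0" using resolvent(1) g(1) by (simp add: D_def P_def)
      ultimately have "g $ k * D = 1" by simp
      then show "1 = z * g $ k - g $ k * (\<Sum>l\<in>UNIV. complex_of_real (M k l) * (g $ l - 1))"
        by (simp add: D_def algebra_simps)
    qed
    show "cmod (g $ k - \<gamma> k) \<le> d * u k" for k using g(1) by (simp add: P_def)
  qed
qed

lemma square_add_mult_le:
  fixes \<gamma> u d :: real
  assumes "0 < \<gamma>" "0 < u" "\<gamma> + u = 1" "0 \<le> d" "3 * d \<le> \<gamma>"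
  shows "(\<gamma> + d * u)\<^sup>2 \<le> \<gamma>"
proof -
  have d3: "d \<le> 1 / 3" using assms by linarith
  have "\<gamma> * d \<le> \<gamma> / 3" using mult_left_mono[OF d3, of \<gamma>] assms(1) by simp
  moreover have "d * d * u \<le> d * d" using assms by (intro mult_left_le) auto
  moreover have "d * d \<le> d / 3" using mult_left_mono[OF d3, of d] assms(4) by simp
  ultimately have "2 * (\<gamma> * d) + d * d * u \<le> \<gamma>" using assms by linarith
  then have "0 \<le> u * (\<gamma> - 2 * (\<gamma> * d) - d * d * u)" using assms(2) by simp
  also have "\<dots> = \<gamma> - (\<gamma> + d * u)\<^sup>2"
  proof -
    have "\<gamma> * (\<gamma> + u) = \<gamma>" using assms(3) by simp
    then show ?thesis by (simp add: power2_eq_square algebra_simps)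
  qed
  finally show ?thesis by simp
qed

lemma qve_Im_pos_near_real_solution:
  fixes M :: "'k::finite \<Rightarrow> 'k \<Rightarrow> real" and \<gamma> u :: "'k \<Rightarrow> real"
  assumes M: "\<And>k l. 0 \<le> M k l" and z: "Im z < 0" and g: "solves_qve M z g"
    and \<gamma>: "\<And>k. 0 < \<gamma> k"
    and u: "\<And>k. 0 < u k" "\<And>k. \<gamma> k + u k = 1" "\<And>k. u k = \<gamma> k * (\<Sum>l\<in>UNIV. M k l * u l)"
    and d: "0 \<le> d" "\<And>k. 3 * d \<le> \<gamma> k"
    and near: "\<And>k. cmod (g $ k - \<gamma> k) \<le> d * u k"
  shows "0 < Im (g $ k)"
proof (rule qve_Im_pos[OF M z g u(1)])
  fix k
  have "cmod (g $ k) \<le> \<gamma> k + d * u k"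
    using norm_triangle_sub[of "g $ k" "of_real (\<gamma> k)"] near[of k] \<gamma>[of k] by simp
  then have "(cmod (g $ k))\<^sup>2 \<le> (\<gamma> k + d * u k)\<^sup>2" by (simp add: power_mono)
  also have "\<dots> \<le> \<gamma> k" using \<gamma> u(1,2) d by (intro square_add_mult_le) auto
  finally have "(cmod (g $ k))\<^sup>2 * (\<Sum>l\<in>UNIV. M k l * u l) \<le> \<gamma> k * (\<Sum>l\<in>UNIV. M k l * u l)"
    using M u(1) by (intro mult_right_mono sum_nonneg) (auto simp: less_imp_le)
  then show "(cmod (g $ k))\<^sup>2 * (\<Sum>l\<in>UNIV. M k l * u l) \<le> u k" by (simp flip: u(3))
qed

lemma qve_solution_near_1:
  fixes M :: "'k::finite \<Rightarrow> 'k \<Rightarrow> real" and u :: "'k \<Rightarrow> real"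
  assumes M: "\<And>k l. 0 \<le> M k l" and u: "\<And>k. 0 < u k" "\<And>k. u k < 1"
    and fp: "\<And>k. u k = (1 - u k) * (\<Sum>l\<in>UNIV. M k l * u l)" and \<epsilon>: "0 < \<epsilon>"
  shows "\<forall>\<^sub>F z in at 1 within {z. Im z < 0}. \<exists>g. solves_qve M z g \<and> (\<forall>k. 0 < Im (g $ k))
           \<and> dist g (\<chi> k. complex_of_real (1 - u k)) \<le> \<epsilon>"
proof -
  define \<gamma> where "\<gamma> k = 1 - u k" for k
  obtain k\<theta> where k\<theta>: "\<And>k. \<gamma> k \<le> \<gamma> k\<theta>" using finite_UNIV_argmax by blast
  obtain k\<mu> where k\<mu>: "\<And>k. \<gamma> k\<mu> \<le> \<gamma> k" using finite_UNIV_argmin by blast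
  obtain km where km: "\<And>k. u km \<le> u k" using finite_UNIV_argmin by blast
  define \<theta> where "\<theta> = \<gamma> k\<theta>"
  define N where "N = real CARD('k)"
  define d where "d = min ((1 - \<theta>) / 4) (min (\<gamma> k\<mu> / 3) (\<epsilon> / N))"
  define \<eta> where "\<eta> = (1 - \<theta>) / 4 * d * u km"
  have \<gamma>: "0 < \<gamma> k" "\<gamma> k \<le> \<theta>" "\<gamma> k + u k = 1" for k
    using u[of k] k\<theta>[of k] by (simp_all add: \<gamma>_def \<theta>_def)
  have \<theta>: "\<theta> < 1" using u(1)[of k\<theta>] by (simp add: \<theta>_def \<gamma>_def)
  have N: "1 \<le> N" by (simp add: N_def)
  have d: "0 < d" "d \<le> (1 - \<theta>) / 4" "3 * d \<le> \<gamma> k" "N * d \<le> \<epsilon>" for k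
  proof -
    show "0 < d" using \<theta> \<gamma>(1)[of k\<mu>] \<epsilon> N by (simp add: d_def)
    show "d \<le> (1 - \<theta>) / 4" unfolding d_def by (rule min.cobounded1)
    have "d \<le> \<gamma> k\<mu> / 3" unfolding d_def by (meson min.cobounded1 min.cobounded2 order.trans)
    then show "3 * d \<le> \<gamma> k" using k\<mu>[of k] by simp
    have "d \<le> \<epsilon> / N" unfolding d_def by (meson min.cobounded2 order.trans)
    then show "N * d \<le> \<epsilon>" using N by (simp add: field_simps)
  qed
  have \<eta>: "0 < \<eta>" using \<theta> d(1) u(1) by (simp add: \<eta>_def)
  have Mu: "u k = \<gamma> k * (\<Sum>l\<in>UNIV. M k l * u l)" for k unfolding \<gamma>_def by (rule fp)
  show ?thesis
    unfolding eventually_at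
  proof (intro exI[of _ \<eta>] conjI \<eta> ballI impI)
    fix z assume "z \<in> {z. Im z < 0}" and "z \<noteq> 1 \<and> dist z 1 < \<eta>"
    then have z: "Im z < 0" and "cmod (z - 1) \<le> \<eta>" by (auto simp: dist_norm)
    moreover have "\<eta> \<le> (1 - \<theta>) / 4 * d * u k" for k
      unfolding \<eta>_def using km[of k] \<theta> d(1) by (intro mult_left_mono) auto
    ultimately have z1: "cmod (z - 1) \<le> (1 - \<theta>) / 4 * d * u k" for k by (meson order_trans)
    obtain g where g: "solves_qve M z g" and near: "\<And>k. cmod (g $ k - \<gamma> k) \<le> d * u k"
      by (rule qve_solution_in_polydisc[OF M \<gamma>(1,2) \<theta> u(1) \<gamma>(3) Mu d(1,2) z1]) blast
    have "0 < Im (g $ k)" for k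
      by (rule qve_Im_pos_near_real_solution[OF M z g \<gamma>(1) u(1) \<gamma>(3) Mu less_imp_le[OF d(1)] d(3) near])
    moreover have "dist g (\<chi> k. complex_of_real (1 - u k)) \<le> N * d"
      unfolding N_def
    proof (rule dist_le_card_mult_nth)
      show "dist (g $ k) ((\<chi> k. complex_of_real (1 - u k)) $ k) \<le> d" for k
      proof -
        have "d * u k \<le> d" using u[of k] d(1) by (intro mult_left_le) auto
        then show ?thesis using near[of k] by (simp add: dist_norm \<gamma>_def)
      qed
    qed
    ultimately show "\<exists>g. solves_qve M z g \<and> (\<forall>k. 0 < Im (g $ k))
        \<and> dist g (\<chi> k. complex_of_real (1 - u k)) \<le> \<epsilon>"
      using g d(4) by force
  qed
qed

lemma QVE_g_eqI:
  assumes M: "\<And>k l. 0 \<le> S $ k $ l * rho $ l" and z: "Im z < 0"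
    and g: "solves_qve (\<lambda>k l. S $ k $ l * rho $ l) z g" "\<And>k. 0 < Im (g $ k)"
  shows "QVE_g rho S z = g"
  unfolding QVE_g_def
proof (rule the_equality)
  show "(\<forall>k. 0 < Im (g $ k)) \<and> solves_QVE rho S z g" using g by (simp add: solves_QVE_iff_solves_qve)
  show "h = g" if "(\<forall>k. 0 < Im (h $ k)) \<and> solves_QVE rho S z h" for h
    using that qve_unique[OF M z _ _ g] by (simp add: solves_QVE_iff_solves_qve)
qed

lemma nontrivial_at_within_lower_halfplane: "\<not> trivial_limit (at x within {z. Im z < Im x})"
  unfolding trivial_limit_within islimpt_approachable not_not
proof (intro allI impI)
  fix e :: real assume e: "0 < e"
  show "\<exists>x'\<in>{z. Im z < Im x}. x' \<noteq> x \<and> dist x' x < e"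
    using e by (intro bexI[of _ "x - \<i> * of_real (e / 2)"]) (auto simp: dist_norm complex_eq_iff norm_mult)
qed

lemma QVE_g1_eq:
  fixes u :: "'k::finite \<Rightarrow> real"
  assumes M: "\<And>k l. 0 \<le> S $ k $ l * rho $ l" and u: "\<And>k. 0 < u k" "\<And>k. u k < 1"
    and fp: "\<And>k. u k = (1 - u k) * (\<Sum>l\<in>UNIV. S $ k $ l * rho $ l * u l)"
  shows "QVE_g1 rho S = (\<chi> k. complex_of_real (1 - u k))"
proof -
  define H where "H = {z :: complex. Im z < 0}"
  have "(QVE_g rho S \<longlongrightarrow> (\<chi> k. complex_of_real (1 - u k))) (at 1 within H)"
  proof (rule tendstoI)
    fix \<epsilon> :: real assume \<epsilon>: "0 < \<epsilon>"
    have "\<forall>\<^sub>F z in at 1 within H. z \<in> H" by (simp add: eventually_at_filter)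
    moreover have "\<forall>\<^sub>F z in at 1 within H. \<exists>g. solves_qve (\<lambda>k l. S $ k $ l * rho $ l) z g
        \<and> (\<forall>k. 0 < Im (g $ k)) \<and> dist g (\<chi> k. complex_of_real (1 - u k)) \<le> \<epsilon> / 2"
      unfolding H_def using \<epsilon> by (intro qve_solution_near_1[OF M u fp]) simp
    ultimately show "\<forall>\<^sub>F z in at 1 within H. dist (QVE_g rho S z) (\<chi> k. complex_of_real (1 - u k)) < \<epsilon>"
    proof eventually_elim
      case (elim z)
      then obtain g where "solves_qve (\<lambda>k l. S $ k $ l * rho $ l) z g" "\<And>k. 0 < Im (g $ k)"
        "dist g (\<chi> k. complex_of_real (1 - u k)) \<le> \<epsilon> / 2" by blast
      then show ?case using QVE_g_eqI[OF M] elim(1) \<epsilon> by (simp add: H_def)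
    qed
  qed
  moreover have "\<not> trivial_limit (at 1 within H)"
    using nontrivial_at_within_lower_halfplane[of 1] by (simp add: H_def)
  ultimately show ?thesis unfolding QVE_g1_def H_def[symmetric] by (rule tendsto_Lim[rotated])
qed

section \<open>The eigenvector identities\<close>

lemma eigenvector_transpose_diagm_mult:
  fixes A :: "'a::comm_ring_1 ^ 'k ^ 'k"
  assumes "transpose A = A" and "(diagm d ** A) *v v = v"
  shows "transpose (diagm d ** A) *v (A *v v) = A *v v"
proof -
  have "transpose (diagm d ** A) *v (A *v v) = A *v ((diagm d ** A) *v v)"
    using assms(1) by (simp add: matrix_transpose_mul transpose_diagm matrix_vector_mul_assoc matrix_mul_assoc)
  then show ?thesis using assms(2) by simp
qed

lemma qve_real_solution_right_eigenvector:
  fixes u :: "'k::finite \<Rightarrow> real"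
  assumes rho_pos: "\<And>k. 0 < rho $ k"
    and fp: "\<And>k. u k = (1 - u k) * (\<Sum>l\<in>UNIV. S $ k $ l * rho $ l * u l)"
  defines "v \<equiv> \<chi> k. sqrt (rho $ k) * u k"
  shows "(diagm (\<chi> k. complex_of_real (1 - u k)) ** cmat (Omega_K rho S)) *v (\<chi> k. complex_of_real (v $ k))
    = (\<chi> k. complex_of_real (v $ k))"
proof -
  have "(1 - u k) * (Omega_K rho S *v v) $ k = v $ k" for k
  proof -
    have "v $ j / sqrt (rho $ j) = u j" for j using rho_pos[of j] by (simp add: v_def)
    then have "(Omega_K rho S *v v) $ k = sqrt (rho $ k) * (\<Sum>l\<in>UNIV. S $ k $ l * rho $ l * u l)"
      by (simp add: Omega_K_mult_vector[OF rho_pos])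
    then show ?thesis using fp[of k] by (simp add: v_def mult.left_commute)
  qed
  then have "(1 - of_real (u k)) * of_real ((Omega_K rho S *v v) $ k) = (of_real (v $ k) :: complex)" for k
    by (metis of_real_1 of_real_diff of_real_mult)
  then show ?thesis by (simp add: diagm_mult_vector cmat_mult_of_real vec_eq_iff)
qed

theorem mainTheorem11:
  fixes rho :: "real ^ 'k" and S :: "real ^ 'k ^ 'k"
  assumes rho_pos: "\<And>k. 0 < rho $ k" and rho_lt1: "\<And>k. rho $ k < 1"
    and rho_sum: "(\<Sum>k\<in>UNIV. rho $ k) = 1"
    and S_sym: "transpose S = S" and S_pos: "\<And>k l. 0 < S $ k $ l"
    and lam: "largest_eigenvalue (Omega_K rho S) > 1"
  defines "vr \<equiv> cmat (diagm (\<chi> k. sqrt (rho $ k))) *v (1 - QVE_g1 rho S)"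
    and "vl \<equiv> cmat (Omega_K rho S) *v (cmat (diagm (\<chi> k. sqrt (rho $ k))) *v (1 - QVE_g1 rho S))"
  shows "(\<forall>k. Im (vr $ k) = 0 \<and> Re (vr $ k) > 0)
    \<and> (diagm (QVE_g1 rho S) ** cmat (Omega_K rho S)) *v vr = vr
    \<and> transpose (diagm (QVE_g1 rho S) ** cmat (Omega_K rho S)) *v vl = vl"
proof -
  obtain u where u: "\<And>k. 0 < u k" "\<And>k. u k < 1"
    and fp: "\<And>k. u k = (1 - u k) * (\<Sum>j\<in>UNIV. S $ k $ j * rho $ j * u j)"
    using QVE_real_solution_exists[OF rho_pos S_sym S_pos lam] by blast
  have "\<And>k l. 0 \<le> S $ k $ l * rho $ l" using S_pos rho_pos by (simp add: less_imp_le)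
  then have g1: "QVE_g1 rho S = (\<chi> k. complex_of_real (1 - u k))" by (rule QVE_g1_eq[OF _ u fp])
  have vr: "vr = (\<chi> k. complex_of_real (sqrt (rho $ k) * u k))"
    by (simp add: vr_def g1 cmat_diagm_mult_vector vec_eq_iff)
  have right: "(diagm (QVE_g1 rho S) ** cmat (Omega_K rho S)) *v vr = vr"
    using qve_real_solution_right_eigenvector[OF rho_pos fp] by (simp add: g1 vr)
  moreover have "transpose (diagm (QVE_g1 rho S) ** cmat (Omega_K rho S)) *v vl = vl"
    using eigenvector_transpose_diagm_mult[OF _ right] S_sym
    by (simp add: vl_def vr_def[symmetric] transpose_cmat transpose_Omega_K)
  moreover have "\<forall>k. Im (vr $ k) = 0 \<and> Re (vr $ k) > 0" using u(1) rho_pos by (simp add: vr)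
  ultimately show ?thesis by blast
qed

end
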